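(* Let $p>3$ be prime, $t\in\{1,3,p,3p\}$, and $1\le r\le 3p-1$ with $\gcd(r,3p)=1$. Then $\Lambda(p,r,t)=\{1\}$ if $r\equiv 2\pmod 3$ and $|r|_p$ is odd, and $\Lambda(p,r,t)=\emptyset$ otherwise.
   Context: $|r|_m$ is the multiplicative order of $r$ modulo $m$ (with $|r|_1=1$). $S_k(x):=1+x+\cdots+x^{k-1}$, $S_0:=0$. For $m\ge1$ with $\gcd(r,m)=1$, $\kappa(m,r,t):=\dfrac{m|r|_m}{\gcd(m,\,tS_{|r|_m}(r))}$. For $d\in\{1,3,p,3p\}$, $\Lambda(d,r,t):=\{\ell>0:\ \ell \text{ divides } \frac{|r|_{3p}}{\gcd(\kappa(d,r,t),|r|_{3p})}\text{ and }\gcd(r^{\ell\kappa(d,r,t)}-1,3p)=d\}$. *)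

theory Defs
  imports "HOL-Number_Theory.Number_Theory"
begin

text \<open>Multiplicative order: we use the library's ord n a (Pocklington), which
  for coprime n a is the least d > 0 with a^d = 1 mod n; in particular ord 1 r = 1.\<close>

definition S :: "nat \<Rightarrow> nat \<Rightarrow> nat" where
  "S k x = (\<Sum>i<k. x ^ i)"

definition kappa :: "nat \<Rightarrow> nat \<Rightarrow> nat \<Rightarrow> nat" where
  "kappa m r t = (m * ord m r) div gcd m (t * S (ord m r) r)"

definition Lambda :: "nat \<Rightarrow> nat \<Rightarrow> nat \<Rightarrow> nat \<Rightarrow> nat set" where
  "Lambda p d r t = {l. l > 0 \<and>
      l dvd (ord (3*p) r div gcd (kappa d r t) (ord (3*p) r)) \<and>
      gcd (r ^ (l * kappa d r t) - 1) (3*p) = d}"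

end

(* Write e = |r|_p and K = kappa(p,r,t).  Since gcd(p, t S_e(r)) is 1 or p, K is e or p e;
   so e divides K and K has the parity of e.  Hence r^(lK) = 1 mod p for every l, and
   gcd(r^(lK) - 1, 3p) = p exactly when 3 does not divide r^(lK) - 1, i.e. when r = 2 mod 3
   and l e is odd.  As r^2 = 1 mod 3, the order |r|_3p divides 2K, so the bound
   |r|_3p / gcd(K, |r|_3p) on l divides 2 and the only odd admissible l is 1. *)
theory Submission
  imports Defs
begin

lemma kappa_eq: "kappa m r t = (m div gcd m (t * S (ord m r) r)) * ord m r"
  unfolding kappa_def by (metis div_mult_swap gcd_dvd1 mult.commute)

lemma ord_dvd_kappa: "ord m r dvd kappa m r t"
  by (simp add: kappa_eq)

lemma odd_kappa_iff:
  assumes "odd m"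
  shows "odd (kappa m r t) \<longleftrightarrow> odd (ord m r)"
proof -
  have "odd (m div gcd m (t * S (ord m r) r))"
    using assms by (metis dvd_div_mult_self gcd_dvd1 dvd_mult2)
  then show ?thesis by (simp add: kappa_eq)
qed

lemma gcd_mult_prime_eq_right_iff:
  fixes x p q :: nat
  assumes "prime p" "prime q" "p \<noteq> q"
  shows "gcd x (q * p) = p \<longleftrightarrow> p dvd x \<and> \<not> q dvd x"
proof (cases "q dvd x")
  case True
  have "\<not> q dvd p"
    using assms primes_dvd_imp_eq by blast
  moreover have "q dvd gcd x (q * p)"
    using True by simp
  ultimately have "gcd x (q * p) \<noteq> p"
    by metis
  then show ?thesis using True by simp
next
  case False
  then have "coprime x q"
    using assms(2) by (simp add: prime_imp_coprime coprime_commute)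
  then have "gcd x (q * p) = gcd x p"
    by (rule gcd_mult_right_left_cancel)
  then show ?thesis using False by (simp add: gcd_nat.absorb_iff2[symmetric])
qed

lemma pow_2_mod_3: "(2::nat) ^ k mod 3 = (if even k then 1 else 2)"
proof (induction k)
  case (Suc k)
  have "(2::nat) ^ Suc k mod 3 = 2 * (2 ^ k mod 3) mod 3"
    by (simp add: mod_mult_right_eq)
  with Suc show ?case by auto
qed simp

lemma three_dvd_pow_sub_one_iff:
  fixes r n :: nat
  assumes "\<not> 3 dvd r"
  shows "3 dvd r ^ n - 1 \<longleftrightarrow> r mod 3 = 1 \<or> even n"
proof -
  have "0 < r"
    using assms by (metis dvd_0_right gr0I)
  then have "3 dvd r ^ n - 1 \<longleftrightarrow> r ^ n mod 3 = 1"
    by (simp add: cong_altdef_nat[symmetric] cong_def)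
  also have "r ^ n mod 3 = (r mod 3) ^ n mod 3"
    by (simp add: power_mod)
  moreover have "r mod 3 = 1 \<or> r mod 3 = 2"
    using assms by presburger
  ultimately show ?thesis
    using pow_2_mod_3[of n] by auto
qed

lemma div_gcd_dvd_of_dvd_mult:
  fixes n k c :: nat
  assumes "0 < n" "n dvd c * k"
  shows "n div gcd k n dvd c"
proof -
  have "n dvd gcd (c * k) (c * n)"
    using assms(2) by simp
  then have "n dvd c * gcd k n"
    by (simp add: gcd_mult_distrib_nat)
  then show ?thesis
    using assms(1) by (simp add: div_dvd_iff_mult)
qed

context
  fixes p r :: nat
  assumes p_prime: "prime p" and p_gt_3: "p > 3" and coprime_r: "coprime r (3 * p)"
begin

lemma not_3_dvd_r: "\<not> 3 dvd r"
  using coprime_r coprime_common_divisor_nat[of r "3 * p" 3] by auto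

lemma gcd_pow_kappa_eq_p_iff:
  "gcd (r ^ (l * kappa p r t) - 1) (3 * p) = p \<longleftrightarrow>
     r mod 3 = 2 \<and> odd l \<and> odd (ord p r)"
proof -
  let ?K = "kappa p r t"
  have mod_3_cases: "r mod 3 = 1 \<or> r mod 3 = 2"
    using not_3_dvd_r by presburger
  have "r ^ (l * ?K) \<ge> 1"
    using not_3_dvd_r by (cases r) auto
  moreover have "[r ^ (l * ?K) = 1] (mod p)"
    by (metis ord_divides ord_dvd_kappa dvd_mult)
  ultimately have p_dvd: "p dvd r ^ (l * ?K) - 1"
    by (simp add: cong_altdef_nat)
  have "p \<noteq> 3" using p_gt_3 by simp
  then have "gcd (r ^ (l * ?K) - 1) (3 * p) = p \<longleftrightarrow> \<not> 3 dvd r ^ (l * ?K) - 1"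
    using gcd_mult_prime_eq_right_iff[OF p_prime, of 3] p_dvd by simp
  also have "\<dots> \<longleftrightarrow> r mod 3 = 2 \<and> odd l \<and> odd (ord p r)"
    using three_dvd_pow_sub_one_iff[OF not_3_dvd_r] mod_3_cases
      odd_kappa_iff[of p] prime_odd_nat[OF p_prime] p_gt_3
    by auto
  finally show ?thesis .
qed

lemma ord_3p_dvd_2_kappa: "ord (3 * p) r dvd 2 * kappa p r t"
proof -
  let ?K = "kappa p r t"
  have "[r ^ (2 * ?K) = 1] (mod 3)"
    using three_dvd_pow_sub_one_iff[OF not_3_dvd_r, of "2 * ?K"] not_3_dvd_r
    by (cases r) (auto simp: cong_altdef_nat)
  moreover have "[r ^ (2 * ?K) = 1] (mod p)"
    by (metis ord_divides ord_dvd_kappa dvd_mult)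
  moreover have "coprime 3 p"
    using p_prime p_gt_3 by (simp add: primes_coprime)
  ultimately have "[r ^ (2 * ?K) = 1] (mod 3 * p)"
    by (rule coprime_cong_mult_nat)
  then show ?thesis
    by (simp only: ord_divides)
qed

lemma ord_3p_div_gcd_kappa_dvd_2:
  "ord (3 * p) r div gcd (kappa p r t) (ord (3 * p) r) dvd 2"
  using coprime_r
  by (intro div_gcd_dvd_of_dvd_mult ord_3p_dvd_2_kappa) (simp add: coprime_commute)

end

theorem lemma5p4:
  fixes p r t :: nat
  assumes "prime p" and "p > 3"
    and "t \<in> {1, 3, p, 3*p}"
    and "1 \<le> r" and "r \<le> 3*p - 1" and "coprime r (3*p)"
  shows "Lambda p p r t =
           (if [r = 2] (mod 3) \<and> odd (ord p r) then {1} else {})"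
proof -
  let ?N = "ord (3 * p) r div gcd (kappa p r t) (ord (3 * p) r)"
  have Lambda_eq:
    "Lambda p p r t = {l. 0 < l \<and> l dvd ?N \<and> r mod 3 = 2 \<and> odd l \<and> odd (ord p r)}"
    unfolding Lambda_def using gcd_pow_kappa_eq_p_iff[OF assms(1,2,6)] by auto
  have "l = 1" if "l dvd ?N" "odd l" for l
  proof -
    have "l dvd 2"
      using that(1) ord_3p_div_gcd_kappa_dvd_2[OF assms(1,2,6)] by (rule dvd_trans)
    then show "l = 1"
      using that(2) by (metis prime_nat_iff two_is_prime_nat)
  qed
  then show ?thesis
    unfolding Lambda_eq cong_def by auto
qed

end
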